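(* Let $n\geq1$, $p$ a prime and $R\subsetneq E_n$. Then every $x\in\mathbb{Z}^n$ satisfying $F^{(i)}_R(x)\le0$ for all $i\in E_n$ and $x_i\geq0$ for all $i\in R$ is a linear combination with non-negative rational coefficients of the vectors $\lambda^{(i)}_k$, $1\le i\le h$, $1\le k\le g_i$.
   Context: $E_n=\{1,\dots,n\}$, indices taken modulo $n$; $e_1,\dots,e_n$ standard basis of $\mathbb{Z}^n$, extended $n$-periodically to $e_m$, $m\in\mathbb{Z}$. $\delta_R^{(i)}=-1$ if $i\in R$, $1$ otherwise; $F^{(d)}_R(x)=\sum_{i=0}^{n-1}p^i\delta_R^{(d+i)}x_{d+i}$. Write $E_n\setminus R=\{r_1,\dots,r_h\}$ ($h=n-|R|\ge1$) so that $r_{i+1}$ is the first element of $E_n\setminus R$ in the cyclic sequence $r_i+1,r_i+2,\dots$ (with $r_{h+1}=r_1$, $r_0=r_h$). Let $g_i$ be the smallest positive integer with $r_{i-1}+g_i\equiv r_i \pmod n$ (so $\sum_i g_i=n$). Define $\lambda^{(i)}_k=e_{r_i}+p^ke_{r_i-k}$ for $1\le k\le g_i-1$ and $\lambda^{(i)}_{g_i}=e_{r_i}-p^{g_i}e_{r_{i-1}}$. *)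

theory Defs
  imports Complex_Main "HOL-Computational_Algebra.Primes"
begin

text \<open>Conventions: E_n = {1..n}; vectors in Z^n are functions nat => int, only their
values at 1..n matter. Indices m :: int are reduced modulo n into {1..n} by red.\<close>

definition red :: "nat \<Rightarrow> int \<Rightarrow> nat" where
  "red n m = nat (((m - 1) mod int n) + 1)"

definition delta :: "nat \<Rightarrow> nat set \<Rightarrow> int \<Rightarrow> int" where
  "delta n R i = (if red n i \<in> R then -1 else 1)"

definition Fform :: "nat \<Rightarrow> nat \<Rightarrow> nat set \<Rightarrow> int \<Rightarrow> (nat \<Rightarrow> int) \<Rightarrow> int" where
  "Fform n p R d x = (\<Sum>i<n. int p ^ i * delta n R (d + int i) * x (red n (d + int i)))"

definition evec :: "nat \<Rightarrow> int \<Rightarrow> nat \<Rightarrow> int" where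
  "evec n m = (\<lambda>j. if red n (int j) = red n m then 1 else 0)"

text \<open>h = n - |R| and enumeration r_1 < ... < r_h of E_n - R (increasing order is a
cyclic enumeration as required), with r_0 = r_h, r_{h+1} = r_1.\<close>
definition hh :: "nat \<Rightarrow> nat set \<Rightarrow> nat" where
  "hh n R = card ({1..n} - R)"

definition rr :: "nat \<Rightarrow> nat set \<Rightarrow> nat \<Rightarrow> nat" where
  "rr n R i = (let h = hh n R; rs = sorted_list_of_set ({1..n} - R) in
     if i = 0 then rs ! (h - 1) else if i = h + 1 then rs ! 0 else rs ! (i - 1))"

definition gg :: "nat \<Rightarrow> nat set \<Rightarrow> nat \<Rightarrow> nat" where
  "gg n R i = (LEAST g. 0 < g \<and> (int (rr n R (i - 1)) + int g) mod int n = int (rr n R i) mod int n)"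

definition lam :: "nat \<Rightarrow> nat \<Rightarrow> nat set \<Rightarrow> nat \<Rightarrow> nat \<Rightarrow> nat \<Rightarrow> int" where
  "lam n p R i k = (\<lambda>j.
     if k < gg n R i
     then evec n (int (rr n R i)) j + int p ^ k * evec n (int (rr n R i) - int k) j
     else evec n (int (rr n R i)) j - int p ^ gg n R i * evec n (int (rr n R (i - 1))) j)"

end

theory Submission
  imports Defs
begin

(* Lift r_0 to r_h - n. Then E_n is covered, once each, by the r_i and by the gap positions
   r_i - k with 0 < k < g_i, and all gap positions lie in R. Take c_{i,k} = x_{r_i-k} / p^k for
   k < g_i and c_{i,g_i} = -F^{(r_{i-1}+1)}(x) / (p^{g_i-1} (p^n - 1)); the hypotheses make them
   non-negative. At a gap position j = r_i - k only lambda^{(i)}_k contributes, with p^k c_{i,k} = x_j.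
   The recursion F^{(d)} = p F^{(d+1)} + (1 - p^n) delta^{(d)} x_d telescopes across the gap before
   r_i to c_{i,1} + ... + c_{i,g_i} = -F^{(r_i)}(x) / (p^n - 1), so the r_i-coordinate of the
   combination is (p F^{(r_i+1)}(x) - F^{(r_i)}(x)) / (p^n - 1) = x_{r_i}. *)

section \<open>Indices modulo n and the forms F^(d)\<close>

lemma red_in_range: "0 < n \<Longrightarrow> red n m \<in> {1..n}"
proof -
  assume "0 < n"
  then have "0 \<le> (m - 1) mod int n" "(m - 1) mod int n < int n" by auto
  then show ?thesis unfolding red_def by auto
qed

lemma red_of_nat: "j \<in> {1..n} \<Longrightarrow> red n (int j) = j"
  unfolding red_def by auto

lemma red_eq_iff: "0 < n \<Longrightarrow> red n a = red n b \<longleftrightarrow> a mod int n = b mod int n"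
  unfolding red_def by (simp add: mod_eq_dvd_iff pos_mod_sign eq_nat_nat_iff)

lemma red_mod: "0 < n \<Longrightarrow> int (red n m) mod int n = m mod int n"
  using red_eq_iff red_of_nat red_in_range by metis

lemma eq_if_mod_eq_in_window:
  fixes a b c :: int
  assumes "c - int n < a" "a \<le> c" "c - int n < b" "b \<le> c" "a mod int n = b mod int n"
  shows "a = b"
proof -
  have "(a - (c - int n + 1)) mod int n = (b - (c - int n + 1)) mod int n"
    using assms(5) mod_diff_cong by blast
  then show ?thesis using assms(1-4) by (simp add: mod_pos_pos_trivial)
qed

lemma Fform_shift:
  assumes "0 < n"
  shows "Fform n p R d x = int p * Fform n p R (d + 1) x + (1 - int p ^ n) * (delta n R d * x (red n d))"
proof -
  define f where "f t = delta n R t * x (red n t)" for t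
  obtain m where m: "n = Suc m" using assms by (cases n) auto
  have periodic: "f (d + int n) = f d"
    using red_eq_iff[OF assms, of "d + int n" d] unfolding f_def delta_def by simp
  have "Fform n p R d x = f d + int p * (\<Sum>i<m. int p ^ i * f (d + 1 + int i))"
    unfolding Fform_def f_def m sum.lessThan_Suc_shift
    by (simp add: sum_distrib_left algebra_simps)
  moreover have "Fform n p R (d + 1) x = (\<Sum>i<m. int p ^ i * f (d + 1 + int i)) + int p ^ m * f d"
    using periodic unfolding Fform_def f_def m by (simp add: add_ac mult.assoc)
  ultimately show ?thesis by (simp add: f_def m algebra_simps)
qed

lemma Fform_mod_cong:
  assumes "0 < n" and "d mod int n = d' mod int n"
  shows "Fform n p R d x = Fform n p R d' x"
proof -
  have "red n (d + int i) = red n (d' + int i)" for i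
    using assms red_eq_iff by (metis mod_add_cong)
  then show ?thesis unfolding Fform_def delta_def by simp
qed

lemma sum_of_bool_unique:
  assumes "finite A" "a \<in> A" "\<And>i. i \<in> A \<Longrightarrow> P i \<longleftrightarrow> i = a"
  shows "(\<Sum>i\<in>A. of_bool (P i) * f i) = (f a :: 'b :: semiring_1)"
proof -
  have "(\<Sum>i\<in>A. of_bool (P i) * f i) = (\<Sum>i\<in>A. if i = a then f i else 0)"
    using assms(3) by (intro sum.cong) auto
  then show ?thesis using assms(1,2) by simp
qed

section \<open>Lifted positions r_i and the coefficients c_{i,k}\<close>

text \<open>The paper's r_0 = r_h, shifted down by n: lift 0 < lift 1 < ... < lift h spans one period.\<close>

definition lift :: "nat \<Rightarrow> nat set \<Rightarrow> nat \<Rightarrow> int" where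
  "lift n R i = int (rr n R i) - (if i = 0 then int n else 0)"

definition lam_coeff :: "nat \<Rightarrow> nat \<Rightarrow> nat set \<Rightarrow> (nat \<Rightarrow> int) \<Rightarrow> nat \<Rightarrow> nat \<Rightarrow> rat" where
  "lam_coeff n p R x i k =
     (if k < gg n R i then of_int (x (red n (lift n R i - int k))) / of_nat p ^ k
      else - of_int (Fform n p R (lift n R (i - 1) + 1) x) / (of_nat p ^ (gg n R i - 1) * (of_nat p ^ n - 1)))"

context
  fixes n :: nat and R :: "nat set"
  assumes R_psubset: "R \<subset> {1..n}"
begin

lemma n_pos: "0 < n"
  using R_psubset by (cases n) auto

lemma hh_pos: "0 < hh n R"
  using R_psubset unfolding hh_def by (simp add: card_gt_0_iff)

lemma rr_eq_nth: "i \<in> {1..hh n R} \<Longrightarrow> rr n R i = sorted_list_of_set ({1..n} - R) ! (i - 1)"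
  unfolding rr_def by (simp add: Let_def)

lemma rr_0: "rr n R 0 = rr n R (hh n R)"
  using hh_pos unfolding rr_def by (simp add: Let_def)

lemma length_sorted_complement: "length (sorted_list_of_set ({1..n} - R)) = hh n R"
  unfolding hh_def by simp

lemma rr_mem: "i \<le> hh n R \<Longrightarrow> rr n R i \<in> {1..n} - R"
proof -
  have "rr n R i \<in> {1..n} - R" if "i \<in> {1..hh n R}" for i
  proof -
    have "i - 1 < length (sorted_list_of_set ({1..n} - R))" using that length_sorted_complement by auto
    then have "sorted_list_of_set ({1..n} - R) ! (i - 1) \<in> set (sorted_list_of_set ({1..n} - R))"
      by (rule nth_mem)
    then show ?thesis using rr_eq_nth[OF that] by simp
  qed
  moreover assume "i \<le> hh n R"
  ultimately show ?thesis using rr_0 hh_pos by (cases "i = 0") auto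
qed

lemma rr_surj: "j \<in> {1..n} - R \<Longrightarrow> \<exists>i\<in>{1..hh n R}. rr n R i = j"
proof -
  assume "j \<in> {1..n} - R"
  then obtain a where "a < hh n R" "sorted_list_of_set ({1..n} - R) ! a = j"
    using length_sorted_complement by (metis finite_Diff finite_atLeastAtMost in_set_conv_nth set_sorted_list_of_set)
  then show ?thesis using rr_eq_nth[of "Suc a"] by auto
qed

lemma rr_less: "1 \<le> a \<Longrightarrow> a < b \<Longrightarrow> b \<le> hh n R \<Longrightarrow> rr n R a < rr n R b"
proof -
  have "sorted_wrt (<) (sorted_list_of_set ({1..n} - R))" by simp
  moreover assume "1 \<le> a" "a < b" "b \<le> hh n R"
  ultimately show ?thesis using rr_eq_nth length_sorted_complement by (simp add: sorted_wrt_iff_nth_less)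
qed

lemma rr_inj: "a \<in> {1..hh n R} \<Longrightarrow> b \<in> {1..hh n R} \<Longrightarrow> rr n R a = rr n R b \<Longrightarrow> a = b"
  using rr_less by (metis atLeastAtMost_iff less_irrefl nat_neq_iff)

lemma lift_less: "a < b \<Longrightarrow> b \<le> hh n R \<Longrightarrow> lift n R a < lift n R b"
  unfolding lift_def using rr_less[of a b] rr_mem[of b] rr_mem[of 0] by (cases "a = 0") auto

lemma lift_0: "lift n R 0 = lift n R (hh n R) - int n"
  unfolding lift_def using rr_0 hh_pos by simp

lemma lift_mono: "a \<le> b \<Longrightarrow> b \<le> hh n R \<Longrightarrow> lift n R a \<le> lift n R b"
  using lift_less by (metis order.order_iff_strict)

lemma red_lift: "i \<le> hh n R \<Longrightarrow> red n (lift n R i) = rr n R i"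
proof -
  assume i: "i \<le> hh n R"
  have "red n (int (rr n R i) - int n) = red n (int (rr n R i))"
    using red_eq_iff[OF n_pos] by simp
  then show ?thesis unfolding lift_def using red_of_nat rr_mem[OF i] by auto
qed

lemma gg_eq_lift_diff:
  assumes i: "i \<in> {1..hh n R}"
  shows "int (gg n R i) = lift n R i - lift n R (i - 1)"
proof -
  define G where "G = lift n R i - lift n R (i - 1)"
  have G_pos: "0 < G" using lift_less[of "i - 1" i] i unfolding G_def by auto
  have G_le: "G \<le> int n"
    using lift_mono[of 0 "i - 1"] lift_mono[of i "hh n R"] lift_0 i unfolding G_def by force
  have "int (rr n R (i - 1)) mod int n = lift n R (i - 1) mod int n"
    using red_mod[OF n_pos] red_lift[of "i - 1"] i by (metis diff_le_self order_trans atLeastAtMost_iff)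
  moreover have "int (rr n R i) = lift n R i" using i unfolding lift_def by simp
  ultimately have step: "(int (rr n R (i - 1)) + int g) mod int n = int (rr n R i) mod int n
      \<longleftrightarrow> int n dvd G - int g" for g
    unfolding G_def by (metis mod_add_left_eq mod_eq_dvd_iff dvd_diff_commute diff_diff_eq2 add.commute)
  have "gg n R i = nat G"
    unfolding gg_def
  proof (rule Least_equality)
    show "0 < nat G \<and> (int (rr n R (i - 1)) + int (nat G)) mod int n = int (rr n R i) mod int n"
      using G_pos step[of "nat G"] by simp
  next
    fix g assume "0 < g \<and> (int (rr n R (i - 1)) + int g) mod int n = int (rr n R i) mod int n"
    then have "0 < g" "int n dvd G - int g" using step by auto
    then show "nat G \<le> g" using G_le zdvd_imp_le[of "int n" "G - int g"] by fastforce
  qed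
  then show ?thesis using G_pos unfolding G_def by simp
qed

lemma gg_pos: "i \<in> {1..hh n R} \<Longrightarrow> 0 < gg n R i"
  using gg_eq_lift_diff lift_less[of "i - 1" i] by force

lemma lift_window_eq:
  assumes "lift n R 0 < a" "a \<le> lift n R (hh n R)" "lift n R 0 < b" "b \<le> lift n R (hh n R)"
    and "red n a = red n b"
  shows "a = b"
  using eq_if_mod_eq_in_window[of "lift n R (hh n R)" n a b] assms lift_0 red_eq_iff[OF n_pos]
  by simp

lemma gap_in_window:
  assumes "i \<in> {1..hh n R}" "lift n R (i - 1) < t" "t \<le> lift n R i"
  shows "lift n R 0 < t \<and> t \<le> lift n R (hh n R)"
proof -
  have "lift n R 0 \<le> lift n R (i - 1)" "lift n R i \<le> lift n R (hh n R)"
    using assms(1) lift_mono by auto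
  then show ?thesis using assms(2,3) by simp
qed

lemma gap_cover:
  "lift n R 0 < t \<Longrightarrow> t \<le> lift n R m \<Longrightarrow> \<exists>i\<in>{1..m}. lift n R (i - 1) < t \<and> t \<le> lift n R i"
proof (induction m)
  case (Suc m)
  then show ?case by (cases "t \<le> lift n R m") force+
qed simp

lemma red_gap_in_R:
  assumes i: "i \<in> {1..hh n R}" and t: "lift n R (i - 1) < t" "t < lift n R i"
  shows "red n t \<in> R"
proof (rule ccontr)
  assume "red n t \<notin> R"
  then obtain m where m: "m \<in> {1..hh n R}" "rr n R m = red n t"
    using rr_surj red_in_range[OF n_pos] by blast
  have "lift n R m = t"
  proof (rule lift_window_eq)
    show "lift n R 0 < lift n R m" "lift n R m \<le> lift n R (hh n R)"
      using m(1) lift_less lift_mono by auto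
    show "lift n R 0 < t" "t \<le> lift n R (hh n R)"
      using gap_in_window[OF i] t by auto
    show "red n (lift n R m) = red n t" using red_lift m by simp
  qed
  moreover have "lift n R i \<le> lift n R m" if "i \<le> m" using that m(1) lift_mono by simp
  moreover have "lift n R m \<le> lift n R (i - 1)" if "\<not> i \<le> m" using that i lift_mono by simp
  ultimately show False using t by fastforce
qed

lemma R_hit_by_gap:
  assumes j: "j \<in> R"
  shows "\<exists>i\<in>{1..hh n R}. \<exists>k. 0 < k \<and> k < gg n R i \<and> red n (lift n R i - int k) = j"
proof -
  have j_range: "j \<in> {1..n}" using j R_psubset by auto
  define t where "t = (if int j \<le> lift n R (hh n R) then int j else int j - int n)"
  have "red n t = red n (int j)"
    unfolding t_def using red_eq_iff[OF n_pos] by simp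
  then have red_t: "red n t = j" using red_of_nat[OF j_range] by simp
  have "1 \<le> lift n R (hh n R)" "lift n R (hh n R) \<le> int n"
    using rr_mem[of "hh n R"] hh_pos unfolding lift_def by auto
  then have "lift n R 0 < t" "t \<le> lift n R (hh n R)"
    unfolding t_def lift_0 using j_range by auto
  then obtain i where i: "i \<in> {1..hh n R}" "lift n R (i - 1) < t" "t \<le> lift n R i"
    using gap_cover by blast
  have "t \<noteq> lift n R i" using red_t red_lift[of i] rr_mem[of i] i(1) j by auto
  then have "0 < lift n R i - t" "lift n R i - t < int (gg n R i)"
    using i gg_eq_lift_diff[OF i(1)] by auto
  then show ?thesis
    using i(1) red_t by (intro bexI[of _ i] exI[of _ "nat (lift n R i - t)"]) auto
qed

lemma gap_position_inj:
  assumes i: "i \<in> {1..hh n R}" and i': "i' \<in> {1..hh n R}"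
    and k: "k < gg n R i" and k': "k' < gg n R i'"
    and eq: "red n (lift n R i - int k) = red n (lift n R i' - int k')"
  shows "i = i' \<and> k = k'"
proof -
  have gap: "lift n R (i - 1) < lift n R i - int k" "lift n R (i' - 1) < lift n R i' - int k'"
    using gg_eq_lift_diff[OF i] gg_eq_lift_diff[OF i'] k k' by auto
  have same: "lift n R i - int k = lift n R i' - int k'"
    using lift_window_eq gap_in_window[OF i gap(1)] gap_in_window[OF i' gap(2)] eq by simp
  have "lift n R i \<le> lift n R (i' - 1)" if "i < i'" using that i' lift_mono by simp
  moreover have "lift n R i' \<le> lift n R (i - 1)" if "i' < i" using that i lift_mono by simp
  ultimately have "i = i'" using gap same by (cases i i' rule: linorder_cases) auto
  then show ?thesis using same by simp
qed

lemma rr_pred_unique: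
  assumes m: "m \<in> {1..hh n R}"
  shows "\<exists>m'\<in>{1..hh n R}. \<forall>i\<in>{1..hh n R}. rr n R (i - 1) = rr n R m \<longleftrightarrow> i = m'"
proof
  show "(if m = hh n R then 1 else Suc m) \<in> {1..hh n R}" using m hh_pos by auto
  show "\<forall>i\<in>{1..hh n R}. rr n R (i - 1) = rr n R m \<longleftrightarrow> i = (if m = hh n R then 1 else Suc m)"
  proof
    fix i assume i: "i \<in> {1..hh n R}"
    define i_pred where "i_pred = (if i = 1 then hh n R else i - 1)"
    have "i_pred \<in> {1..hh n R}" using i unfolding i_pred_def by auto
    moreover have "rr n R (i - 1) = rr n R i_pred" using rr_0 unfolding i_pred_def by simp
    ultimately have "rr n R (i - 1) = rr n R m \<longleftrightarrow> i_pred = m" using rr_inj[OF _ m] by metis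
    also have "\<dots> \<longleftrightarrow> i = (if m = hh n R then 1 else Suc m)" using i m unfolding i_pred_def by auto
    finally show "rr n R (i - 1) = rr n R m \<longleftrightarrow> i = (if m = hh n R then 1 else Suc m)" .
  qed
qed

section \<open>Coordinates of combinations of the vectors lambda\<close>

lemma lam_eq:
  assumes j: "j \<in> {1..n}" and i: "i \<in> {1..hh n R}"
  shows "lam n p R i k j = (if k < gg n R i
      then of_bool (j = rr n R i) + int p ^ k * of_bool (j = red n (lift n R i - int k))
      else of_bool (j = rr n R i) - int p ^ gg n R i * of_bool (j = rr n R (i - 1)))"
proof -
  have evec: "evec n m j = of_bool (j = red n m)" for m
    unfolding evec_def using red_of_nat[OF j] by auto
  have "red n (int (rr n R i)) = rr n R i" "red n (int (rr n R (i - 1))) = rr n R (i - 1)"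
    using red_of_nat rr_mem i by (meson atLeastAtMost_iff diff_le_self le_trans DiffD1)+
  moreover have "lift n R i = int (rr n R i)" using i unfolding lift_def by simp
  ultimately show ?thesis unfolding lam_def evec by simp
qed

lemma lam_combination_eq:
  fixes c :: "nat \<Rightarrow> nat \<Rightarrow> rat"
  assumes j: "j \<in> {1..n}"
  shows "(\<Sum>i=1..hh n R. \<Sum>k=1..gg n R i. c i k * of_int (lam n p R i k j))
    = (\<Sum>i=1..hh n R. of_bool (j = rr n R i) * (\<Sum>k=1..gg n R i. c i k))
    + (\<Sum>i=1..hh n R. \<Sum>k=1..gg n R i - 1. of_bool (j = red n (lift n R i - int k)) * (of_nat p ^ k * c i k))
    - (\<Sum>i=1..hh n R. of_bool (j = rr n R (i - 1)) * (of_nat p ^ gg n R i * c i (gg n R i)))"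
proof -
  have "(\<Sum>k=1..gg n R i. c i k * of_int (lam n p R i k j))
    = of_bool (j = rr n R i) * (\<Sum>k=1..gg n R i. c i k)
    + (\<Sum>k=1..gg n R i - 1. of_bool (j = red n (lift n R i - int k)) * (of_nat p ^ k * c i k))
    - of_bool (j = rr n R (i - 1)) * (of_nat p ^ gg n R i * c i (gg n R i))"
    if i: "i \<in> {1..hh n R}" for i
  proof -
    obtain t where t: "gg n R i = Suc t"
      using gg_pos[OF i] by (cases "gg n R i") auto
    have "(\<Sum>k=1..t. c i k * of_int (lam n p R i k j))
        = (\<Sum>k=1..t. of_bool (j = rr n R i) * c i k
            + of_bool (j = red n (lift n R i - int k)) * (of_nat p ^ k * c i k))"
      using t by (intro sum.cong) (auto simp: lam_eq[OF j i] algebra_simps)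
    moreover have "c i (Suc t) * of_int (lam n p R i (Suc t) j) = of_bool (j = rr n R i) * c i (Suc t)
        - of_bool (j = rr n R (i - 1)) * (of_nat p ^ Suc t * c i (Suc t))"
      using t by (simp add: lam_eq[OF j i] algebra_simps)
    ultimately show ?thesis
      unfolding t by (simp add: sum.distrib sum_distrib_left)
  qed
  then show ?thesis by (simp add: sum.distrib sum_subtractf)
qed

lemma lam_combination_at_R:
  fixes c :: "nat \<Rightarrow> nat \<Rightarrow> rat"
  assumes j: "j \<in> R" and i0: "i0 \<in> {1..hh n R}" and k0: "0 < k0" "k0 < gg n R i0"
    and hit: "red n (lift n R i0 - int k0) = j"
  shows "(\<Sum>i=1..hh n R. \<Sum>k=1..gg n R i. c i k * of_int (lam n p R i k j)) = of_nat p ^ k0 * c i0 k0"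
proof -
  have j_range: "j \<in> {1..n}" using j R_psubset by auto
  have not_rr: "j \<noteq> rr n R i" "j \<noteq> rr n R (i - 1)" if "i \<in> {1..hh n R}" for i
    using rr_mem[of i] rr_mem[of "i - 1"] that j by (auto simp: le_diff_conv)
  have zero_rr: "(\<Sum>i=1..hh n R. of_bool (j = rr n R i) * X i) = 0"
      "(\<Sum>i=1..hh n R. of_bool (j = rr n R (i - 1)) * X i) = 0" for X :: "nat \<Rightarrow> rat"
    using not_rr by (auto intro!: sum.neutral)
  have hit_iff: "j = red n (lift n R i - int k) \<longleftrightarrow> i = i0 \<and> k = k0"
    if "i \<in> {1..hh n R}" "k \<in> {1..gg n R i - 1}" for i k
  proof -
    have k: "k < gg n R i" using that by auto
    show ?thesis
    proof
      assume "j = red n (lift n R i - int k)"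
      then show "i = i0 \<and> k = k0" using gap_position_inj[OF that(1) i0 k k0(2)] hit by simp
    qed (use hit in simp)
  qed
  have inner: "(\<Sum>k=1..gg n R i - 1. of_bool (j = red n (lift n R i - int k)) * (of_nat p ^ k * c i k))
      = of_bool (i = i0) * (of_nat p ^ k0 * c i0 k0)" if i: "i \<in> {1..hh n R}" for i
  proof (cases "i = i0")
    case True
    have "(\<Sum>k=1..gg n R i0 - 1. of_bool (j = red n (lift n R i0 - int k)) * (of_nat p ^ k * c i0 k))
        = of_nat p ^ k0 * c i0 k0"
      using k0 hit_iff[OF i0] by (intro sum_of_bool_unique) auto
    with True show ?thesis by simp
  next
    case False
    then show ?thesis using hit_iff[OF i] by simp
  qed
  have "(\<Sum>i=1..hh n R. \<Sum>k=1..gg n R i - 1. of_bool (j = red n (lift n R i - int k)) * (of_nat p ^ k * c i k))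
      = (\<Sum>i=1..hh n R. of_bool (i = i0) * (of_nat p ^ k0 * c i0 k0))"
    using inner by (rule sum.cong[OF refl])
  also have "\<dots> = of_nat p ^ k0 * c i0 k0"
    using i0 by (intro sum_of_bool_unique) auto
  finally show ?thesis
    unfolding lam_combination_eq[OF j_range] zero_rr by simp
qed

lemma lam_combination_at_rr:
  fixes c :: "nat \<Rightarrow> nat \<Rightarrow> rat"
  assumes m: "m \<in> {1..hh n R}" and m': "m' \<in> {1..hh n R}"
    and pred_m': "\<And>i. i \<in> {1..hh n R} \<Longrightarrow> rr n R (i - 1) = rr n R m \<longleftrightarrow> i = m'"
  shows "(\<Sum>i=1..hh n R. \<Sum>k=1..gg n R i. c i k * of_int (lam n p R i k (rr n R m)))
      = (\<Sum>k=1..gg n R m. c m k) - of_nat p ^ gg n R m' * c m' (gg n R m')"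
proof -
  have "rr n R m \<in> {1..n} - R" using rr_mem m by simp
  moreover have "red n (lift n R i - int k) \<in> R" if "i \<in> {1..hh n R}" "k \<in> {1..gg n R i - 1}" for i k
    using that red_gap_in_R gg_eq_lift_diff by force
  ultimately have middle: "(\<Sum>i=1..hh n R. \<Sum>k=1..gg n R i - 1.
      of_bool (rr n R m = red n (lift n R i - int k)) * (of_nat p ^ k * c i k)) = 0"
    by (intro sum.neutral ballI) auto
  have "(\<Sum>i=1..hh n R. of_bool (rr n R m = rr n R i) * (\<Sum>k=1..gg n R i. c i k)) = (\<Sum>k=1..gg n R m. c m k)"
    using m rr_inj[OF _ m] by (intro sum_of_bool_unique) auto
  moreover have "(\<Sum>i=1..hh n R. of_bool (rr n R m = rr n R (i - 1)) * (of_nat p ^ gg n R i * c i (gg n R i)))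
      = of_nat p ^ gg n R m' * c m' (gg n R m')"
    using m' pred_m' by (intro sum_of_bool_unique) (simp_all, metis)
  moreover have "rr n R m \<in> {1..n}" using rr_mem m by simp
  ultimately show ?thesis unfolding lam_combination_eq[OF \<open>rr n R m \<in> {1..n}\<close>] middle by simp
qed

context
  fixes p :: nat and x :: "nat \<Rightarrow> int"
  assumes p_ge_2: "2 \<le> p"
begin

lemma p_pos: "0 < (of_nat p :: rat)"
  using p_ge_2 by simp

lemma one_less_p_power: "1 < (of_nat p :: rat) ^ n"
  using p_ge_2 n_pos by (intro one_less_power) auto

lemma p_power_lam_coeff_gap:
  "k < gg n R i \<Longrightarrow> of_nat p ^ k * lam_coeff n p R x i k = of_int (x (red n (lift n R i - int k)))"
  using p_ge_2 unfolding lam_coeff_def by simp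

lemma Fform_gap_telescope:
  assumes i: "i \<in> {1..hh n R}"
  shows "k < gg n R i \<Longrightarrow> of_int (Fform n p R (lift n R i - int k) x) / of_nat p ^ k
    = of_int (Fform n p R (lift n R i) x) + (of_nat p ^ n - 1) * (\<Sum>l=1..k. lam_coeff n p R x i l)"
proof (induction k)
  case (Suc k)
  define d where "d = lift n R i - int (Suc k)"
  have "red n d \<in> R"
    using red_gap_in_R[OF i] gg_eq_lift_diff[OF i] Suc.prems unfolding d_def by simp
  then have "Fform n p R d x = int p * Fform n p R (lift n R i - int k) x + (int p ^ n - 1) * x (red n d)"
    using Fform_shift[OF n_pos, of p R d x] unfolding d_def delta_def by (simp add: algebra_simps)
  then have "of_int (Fform n p R d x)
      = of_nat p * of_int (Fform n p R (lift n R i - int k) x) + (of_nat p ^ n - 1) * (of_int (x (red n d)) :: rat)"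
    by simp
  then have "(of_int (Fform n p R d x) :: rat) / of_nat p ^ Suc k
      = of_int (Fform n p R (lift n R i - int k) x) / of_nat p ^ k
        + (of_nat p ^ n - 1) * (of_int (x (red n d)) / of_nat p ^ Suc k)"
    using p_pos by (simp add: field_simps)
  also have "of_int (x (red n d)) / of_nat p ^ Suc k = lam_coeff n p R x i (Suc k)"
    using Suc.prems unfolding lam_coeff_def d_def by simp
  finally show ?case using Suc by (simp add: d_def algebra_simps)
qed simp

lemma lam_coeff_block_sum:
  assumes i: "i \<in> {1..hh n R}"
  shows "(\<Sum>k=1..gg n R i. lam_coeff n p R x i k) = - of_int (Fform n p R (lift n R i) x) / (of_nat p ^ n - 1)"
proof -
  obtain t where t: "gg n R i = Suc t"
    using gg_pos[OF i] by (cases "gg n R i") auto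
  have "lift n R i - int t = lift n R (i - 1) + 1" using gg_eq_lift_diff[OF i] t by simp
  then have "lam_coeff n p R x i (Suc t) = - (of_int (Fform n p R (lift n R i - int t) x) / of_nat p ^ t)
      / (of_nat p ^ n - 1)"
    unfolding lam_coeff_def t by simp
  also have "\<dots> = - of_int (Fform n p R (lift n R i) x) / (of_nat p ^ n - 1) - (\<Sum>k=1..t. lam_coeff n p R x i k)"
    unfolding Fform_gap_telescope[OF i, of t, unfolded t, OF lessI] using one_less_p_power
    by (simp add: field_simps)
  finally show ?thesis unfolding t by simp
qed

lemma p_power_lam_coeff_last:
  assumes i: "i \<in> {1..hh n R}"
  shows "of_nat p ^ gg n R i * lam_coeff n p R x i (gg n R i)
    = - of_nat p * of_int (Fform n p R (lift n R (i - 1) + 1) x) / (of_nat p ^ n - 1)"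
proof -
  obtain t where t: "gg n R i = Suc t"
    using gg_pos[OF i] by (cases "gg n R i") auto
  show ?thesis unfolding lam_coeff_def t using p_pos one_less_p_power by (simp add: field_simps)
qed

lemma lam_combination_lam_coeff:
  assumes j: "j \<in> {1..n}"
  shows "of_int (x j) = (\<Sum>i=1..hh n R. \<Sum>k=1..gg n R i. lam_coeff n p R x i k * of_int (lam n p R i k j))"
proof (cases "j \<in> R")
  case True
  then obtain i k where i: "i \<in> {1..hh n R}" and k: "0 < k" "k < gg n R i"
    and hit: "red n (lift n R i - int k) = j"
    using R_hit_by_gap by blast
  show ?thesis
    unfolding lam_combination_at_R[OF True i k hit] p_power_lam_coeff_gap[OF k(2)] hit ..
next
  case False
  then obtain m where m: "m \<in> {1..hh n R}" "rr n R m = j" using rr_surj j by blast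
  obtain m' where m': "m' \<in> {1..hh n R}"
    and pred_m': "\<And>i. i \<in> {1..hh n R} \<Longrightarrow> rr n R (i - 1) = rr n R m \<longleftrightarrow> i = m'"
    using rr_pred_unique[OF m(1)] by blast
  have "red n (lift n R (m' - 1)) = red n (lift n R m)"
    using red_lift pred_m'[OF m'] m m' by auto
  then have "(lift n R (m' - 1) + 1) mod int n = (lift n R m + 1) mod int n"
    using red_eq_iff[OF n_pos] mod_add_cong by blast
  then have F_next: "Fform n p R (lift n R (m' - 1) + 1) x = Fform n p R (lift n R m + 1) x"
    by (rule Fform_mod_cong[OF n_pos])
  have "red n (lift n R m) = j" using red_lift[of m] m by simp
  then have "Fform n p R (lift n R m) x = int p * Fform n p R (lift n R m + 1) x + (1 - int p ^ n) * x j"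
    using Fform_shift[OF n_pos, of p R "lift n R m" x] False unfolding delta_def by simp
  then have F_shift: "(of_int (Fform n p R (lift n R m) x) :: rat)
      = of_nat p * of_int (Fform n p R (lift n R m + 1) x) + (1 - of_nat p ^ n) * of_int (x j)"
    by simp
  have "- of_int (Fform n p R (lift n R m) x) / (of_nat p ^ n - 1)
      + of_nat p * of_int (Fform n p R (lift n R (m' - 1) + 1) x) / (of_nat p ^ n - 1)
      = (of_nat p * of_int (Fform n p R (lift n R m + 1) x) - of_int (Fform n p R (lift n R m) x))
        / (of_nat p ^ n - 1 :: rat)"
    unfolding F_next by (simp add: diff_divide_distrib)
  also have "\<dots> = (of_nat p ^ n - 1) * of_int (x j) / (of_nat p ^ n - 1)"
    unfolding F_shift by (simp add: algebra_simps)
  also have "\<dots> = of_int (x j)" using one_less_p_power by simp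
  finally have F_eq: "- of_int (Fform n p R (lift n R m) x) / (of_nat p ^ n - 1)
      + of_nat p * of_int (Fform n p R (lift n R (m' - 1) + 1) x) / (of_nat p ^ n - 1) = (of_int (x j) :: rat)" .
  have "(\<Sum>i=1..hh n R. \<Sum>k=1..gg n R i. lam_coeff n p R x i k * of_int (lam n p R i k (rr n R m)))
      = (\<Sum>k=1..gg n R m. lam_coeff n p R x m k) - of_nat p ^ gg n R m' * lam_coeff n p R x m' (gg n R m')"
    by (rule lam_combination_at_rr[OF m(1) m' pred_m'])
  also have "\<dots> = of_int (x j)"
    unfolding lam_coeff_block_sum[OF m(1)] p_power_lam_coeff_last[OF m'] F_eq[symmetric] by simp
  finally show ?thesis using m(2) by simp
qed

lemma lam_coeff_nonneg:
  assumes F_nonpos: "\<forall>d\<in>{1..n}. Fform n p R (int d) x \<le> 0" and x_R: "\<forall>j\<in>R. 0 \<le> x j"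
    and i: "i \<in> {1..hh n R}" and k: "k \<in> {1..gg n R i}"
  shows "0 \<le> lam_coeff n p R x i k"
proof (cases "k < gg n R i")
  case True
  then have "red n (lift n R i - int k) \<in> R"
    using red_gap_in_R[OF i] gg_eq_lift_diff[OF i] k by simp
  then show ?thesis using x_R True unfolding lam_coeff_def by simp
next
  case False
  define d where "d = lift n R (i - 1) + 1"
  have "Fform n p R d x = Fform n p R (int (red n d)) x"
    using red_mod[OF n_pos] by (intro Fform_mod_cong[OF n_pos]) simp
  then have "Fform n p R d x \<le> 0" using F_nonpos red_in_range[OF n_pos] by simp
  moreover have "0 < of_nat p ^ (gg n R i - 1) * (of_nat p ^ n - 1 :: rat)"
    using p_pos one_less_p_power by simp
  ultimately show ?thesis
    using False unfolding lam_coeff_def d_def[symmetric] by (simp add: divide_nonpos_pos)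
qed

end

end

theorem mainTheorem5:
  fixes n p :: nat and R :: "nat set" and x :: "nat \<Rightarrow> int"
  assumes "n \<ge> 1" and "prime p" and "R \<subset> {1..n}"
    and "\<forall>i\<in>{1..n}. Fform n p R (int i) x \<le> 0"
    and "\<forall>i\<in>R. x i \<ge> 0"
  shows "\<exists>c :: nat \<Rightarrow> nat \<Rightarrow> rat.
           (\<forall>i\<in>{1..hh n R}. \<forall>k\<in>{1..gg n R i}. c i k \<ge> 0) \<and>
           (\<forall>j\<in>{1..n}. rat_of_int (x j) =
              (\<Sum>i=1..hh n R. \<Sum>k=1..gg n R i. c i k * rat_of_int (lam n p R i k j)))"
proof (intro exI[of _ "lam_coeff n p R x"] conjI ballI)
  have p: "2 \<le> p" using \<open>prime p\<close> by (rule prime_ge_2_nat)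
  show "0 \<le> lam_coeff n p R x i k" if "i \<in> {1..hh n R}" "k \<in> {1..gg n R i}" for i k
    using lam_coeff_nonneg[OF \<open>R \<subset> {1..n}\<close> p assms(4,5) that] .
  show "of_int (x j) = (\<Sum>i=1..hh n R. \<Sum>k=1..gg n R i. lam_coeff n p R x i k * of_int (lam n p R i k j))"
    if "j \<in> {1..n}" for j
    using lam_combination_lam_coeff[OF \<open>R \<subset> {1..n}\<close> p that] .
qed

end
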